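(* Assume $p>2$. Let $\phi$ be a quasilinear $p$-form over $F$ with $1\in D(\phi)$ and let $L$ be a field extension of $F$. Suppose there exist a polynomial $P\in F^p[T]$ in one variable with $2\le\deg P<p$ and an element $\alpha\in D(\phi_L)\setminus\{0\}$ such that $\alpha P(b)\in D(\phi_L)$ for all $b\in D(\phi)$. Then $(\phi_L)_{an}$ is a quasi-Pfister $p$-form.
   Context: Let $p$ be a prime and $F$ a field of characteristic $p$; $F^p=\{x^p:x\in F\}$. A quasilinear $p$-form over a field $K$ of characteristic $p$ is a map $\phi\colon V\to K$ on a nonzero finite-dimensional $K$-vector space, homogeneous of degree $p$ and additive; equivalently $\phi\simeq\langle a_1,\dots,a_n\rangle\colon(\lambda_i)\mapsto\sum a_i\lambda_i^p$. $D(\phi)=\{\phi(v)\}$; $\phi_L$ is the scalar extension. $\phi_{an}$ is the unique (up to isomorphism) anisotropic form (no nonzero isotropic vectors) with $D(\phi_{an})=D(\phi)$. An $n$-fold quasi-Pfister $p$-form is $\bigotimes_{i=1}^n\langle1,a_i,\dots,a_i^{p-1}\rangle$ ($n\ge0$, 0-fold: $\langle1\rangle$). *)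

theory Defs
  imports "HOL-Computational_Algebra.Polynomial"
begin

text \<open>The ambient field L is a type 'a :: field; the base field F is a subfield
  of L, given as a subset. A quasilinear p-form is represented in diagonal form
  by its (nonempty) list of coefficients a = [a_1,...,a_n]; a vector is a function
  v :: nat => 'a of which only the entries v 0, ..., v (n-1) matter.\<close>

definition is_subfield :: "'a::field set \<Rightarrow> bool" where
  "is_subfield F \<longleftrightarrow> 0 \<in> F \<and> 1 \<in> F \<and>
     (\<forall>x\<in>F. \<forall>y\<in>F. x + y \<in> F \<and> x * y \<in> F) \<and>
     (\<forall>x\<in>F. - x \<in> F) \<and> (\<forall>x\<in>F. x \<noteq> 0 \<longrightarrow> inverse x \<in> F)"

definition qf_val :: "nat \<Rightarrow> 'a::field list \<Rightarrow> (nat \<Rightarrow> 'a) \<Rightarrow> 'a" where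
  "qf_val p a v = (\<Sum>i<length a. a ! i * v i ^ p)"

text \<open>D(phi) over a field K (K a subfield of the ambient field): the set of values
  on vectors with entries in K. For the form over F use K = F, for the scalar
  extension phi_L use K = UNIV.\<close>
definition qf_D :: "'a::field set \<Rightarrow> nat \<Rightarrow> 'a list \<Rightarrow> 'a set" where
  "qf_D K p a = {qf_val p a v | v. \<forall>i<length a. v i \<in> K}"

definition is_qform :: "'a::field set \<Rightarrow> 'a list \<Rightarrow> bool" where
  "is_qform K a \<longleftrightarrow> a \<noteq> [] \<and> set a \<subseteq> K"

definition qf_anisotropic :: "'a::field set \<Rightarrow> nat \<Rightarrow> 'a list \<Rightarrow> bool" where
  "qf_anisotropic K p a \<longleftrightarrow>
     (\<forall>v. (\<forall>i<length a. v i \<in> K) \<longrightarrow> qf_val p a v = 0 \<longrightarrow> (\<forall>i<length a. v i = 0))"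

definition mat_app :: "nat \<Rightarrow> (nat \<Rightarrow> nat \<Rightarrow> 'a::field) \<Rightarrow> (nat \<Rightarrow> 'a) \<Rightarrow> nat \<Rightarrow> 'a" where
  "mat_app n M v = (\<lambda>i. \<Sum>j<n. M i j * v j)"

definition qf_iso :: "nat \<Rightarrow> 'a::field list \<Rightarrow> 'a list \<Rightarrow> bool" where
  "qf_iso p a b \<longleftrightarrow> length a = length b \<and>
     (\<exists>M N. (\<forall>v. \<forall>i<length a. mat_app (length a) N (mat_app (length a) M v) i = v i) \<and>
            (\<forall>v. \<forall>i<length a. mat_app (length a) M (mat_app (length a) N v) i = v i) \<and>
            (\<forall>v. qf_val p b (mat_app (length a) M v) = qf_val p a v))"

definition qf_tensor :: "'a::field list \<Rightarrow> 'a list \<Rightarrow> 'a list" where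
  "qf_tensor a b = concat (map (\<lambda>x. map (\<lambda>y. x * y) b) a)"

fun qpfister :: "nat \<Rightarrow> 'a::field list \<Rightarrow> 'a list" where
  "qpfister p [] = [1]"
| "qpfister p (c # cs) = qf_tensor (map (\<lambda>j. c ^ j) [0..<p]) (qpfister p cs)"

definition is_quasi_pfister :: "nat \<Rightarrow> 'a::field list \<Rightarrow> bool" where
  "is_quasi_pfister p a \<longleftrightarrow> (\<exists>cs. qf_iso p a (qpfister p cs))"

end

theory Submission
  imports Defs "HOL-Algebra.Embedded_Algebras" "HOL-Computational_Algebra.Computational_Algebra"
begin

hide_const (open) up_ring.coeff up_ring.monom module.smult

text \<open>
  Let \<open>V = D(\<phi>\<^sub>L)\<close>, an \<open>L\<^sup>p\<close>-subspace of \<open>L\<close> containing \<open>1\<close>. Replacing a polynomial \<open>Q\<close> by the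
  finite difference \<open>Q(X + h) - Q(X)\<close> with \<open>h \<in> D(\<phi>)\<close> preserves the hypothesis on \<open>P\<close>;
  differencing \<open>P\<close> down to degree 2 and then with steps \<open>x, y \<in> D(\<phi>)\<close> leaves the constant
  \<open>d! lc(P) x y\<close>, and as \<open>d < p\<close> the factor \<open>d! lc(P)\<close> is a nonzero \<open>p\<close>-th power. Hence
  \<open>\<alpha> x y \<in> V\<close>, and by \<open>L\<^sup>p\<close>-bilinearity \<open>\<alpha> X Y \<in> V\<close> for all \<open>X, Y \<in> V\<close>. Since \<open>p\<close> is odd,
  iterating yields \<open>\<alpha>\<^sup>p X Y \<in> V\<close>, so \<open>V\<close> is a field.

  A field \<open>K\<close> with \<open>L\<^sup>p \<subseteq> K \<subseteq> L\<close> of finite \<open>L\<^sup>p\<close>-dimension is the value set of an anisotropic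
  quasi-Pfister form: if \<open>W \<supseteq> L\<^sup>p\<close> is a subfield and \<open>c \<notin> W\<close>, then \<open>1, c, \<dots>, c\<^sup>p\<^sup>-\<^sup>1\<close> are
  \<open>W\<close>-independent, so adjoining such elements one at a time builds the form. Finally, anisotropic
  forms with the same value set are isometric, both being \<open>L\<^sup>p\<close>-bases of that set.
\<close>

lemma is_subfield_UNIV: "is_subfield UNIV"
  by (simp add: is_subfield_def)

lemma is_subfieldD:
  assumes "is_subfield W"
  shows "0 \<in> W" "1 \<in> W" "x \<in> W \<Longrightarrow> y \<in> W \<Longrightarrow> x + y \<in> W" "x \<in> W \<Longrightarrow> y \<in> W \<Longrightarrow> x * y \<in> W"
    "x \<in> W \<Longrightarrow> - x \<in> W" "x \<in> W \<Longrightarrow> inverse x \<in> W"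
  using assms unfolding is_subfield_def by (auto simp: inverse_eq_divide)

lemma is_subfield_diff:
  assumes "is_subfield W" and "x \<in> W" and "y \<in> W"
  shows "x - y \<in> W"
  using is_subfieldD(3)[OF assms(1,2) is_subfieldD(5)[OF assms(1,3)]] by simp

lemma of_nat_in_subfield: "is_subfield W \<Longrightarrow> of_nat n \<in> W"
  by (induction n) (auto simp: is_subfield_def)

lemma is_subfield_power: "is_subfield W \<Longrightarrow> x \<in> W \<Longrightarrow> x ^ n \<in> W"
  by (induction n) (simp_all add: is_subfieldD)

lemma is_subfield_sum: "is_subfield W \<Longrightarrow> (\<And>i. i \<in> A \<Longrightarrow> f i \<in> W) \<Longrightarrow> sum f A \<in> W"
  by (induction A rule: infinite_finite_induct) (simp_all add: is_subfieldD)

lemma qf_val_cong: "(\<And>i. i < length a \<Longrightarrow> v i = u i) \<Longrightarrow> qf_val p a v = qf_val p a u"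
  unfolding qf_val_def by (intro sum.cong) auto

lemma qf_val_scale: "qf_val p a (\<lambda>i. y * v i) = y ^ p * qf_val p a v"
  unfolding qf_val_def by (simp add: sum_distrib_left power_mult_distrib algebra_simps)

lemma qf_val_unit_vector:
  assumes "p > 0" and "i < length a"
  shows "qf_val p a (\<lambda>j. if j = i then 1 else 0) = a ! i"
proof -
  have "qf_val p a (\<lambda>j. if j = i then 1 else 0) = (\<Sum>j<length a. if j = i then a ! j else 0)"
    unfolding qf_val_def using assms(1) by (intro sum.cong) auto
  then show ?thesis using assms(2) by simp
qed

lemma qf_D_mono: "K \<subseteq> K' \<Longrightarrow> qf_D K p a \<subseteq> qf_D K' p a"
  unfolding qf_D_def by blast

lemma nth_in_qf_D:
  assumes "is_subfield K" and "p > 0" and "i < length a"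
  shows "a ! i \<in> qf_D K p a"
  unfolding qf_D_def using assms qf_val_unit_vector[OF assms(2,3)]
  by (intro CollectI exI[of _ "\<lambda>j. if j = i then 1 else 0"]) (auto simp: is_subfield_def)

lemma zero_in_qf_D:
  assumes "is_subfield K" and "p > 0"
  shows "0 \<in> qf_D K p a"
  unfolding qf_D_def using assms
  by (intro CollectI exI[of _ "\<lambda>_. 0"]) (auto simp: is_subfield_def qf_val_def power_0_left)

lemma qf_D_scale:
  assumes "is_subfield K" and "y \<in> K" and "x \<in> qf_D K p a"
  shows "y ^ p * x \<in> qf_D K p a"
proof -
  obtain v where "x = qf_val p a v" and "\<forall>i<length a. v i \<in> K"
    using assms(3) by (auto simp: qf_D_def)
  then show ?thesis
    unfolding qf_D_def using assms(1,2) qf_val_scale[of p a y v]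
    by (intro CollectI exI[of _ "\<lambda>i. y * v i"]) (auto simp: is_subfield_def)
qed

context
  fixes p :: nat
  assumes prime_p: "prime p" and char_p: "CHAR('a::field) = p"
begin

lemma qf_val_add: "qf_val p a (\<lambda>i. v i + u i) = qf_val p a v + qf_val p (a::'a list) u"
proof -
  have "(x + y) ^ p = x ^ p + y ^ p" for x y :: 'a
    by (rule freshmans_dream) (use prime_p char_p in auto)
  then show ?thesis
    unfolding qf_val_def by (simp add: distrib_left sum.distrib)
qed

lemma qf_val_diff: "qf_val p a (\<lambda>i. v i - u i) = qf_val p a v - qf_val p (a::'a list) u"
  using qf_val_add[of a "\<lambda>i. v i - u i" u] by simp

lemma qf_D_add:
  assumes "is_subfield K" and "x \<in> qf_D K p a" and "y \<in> qf_D K p (a::'a list)"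
  shows "x + y \<in> qf_D K p a"
proof -
  obtain v u where "x = qf_val p a v" "\<forall>i<length a. v i \<in> K"
    and "y = qf_val p a u" "\<forall>i<length a. u i \<in> K"
    using assms(2,3) by (auto simp: qf_D_def)
  then show ?thesis
    unfolding qf_D_def using assms(1) qf_val_add[of a v u]
    by (intro CollectI exI[of _ "\<lambda>i. v i + u i"]) (auto simp: is_subfield_def)
qed

lemma qf_D_uminus:
  assumes "is_subfield K" and "x \<in> qf_D K p (a::'a list)"
  shows "- x \<in> qf_D K p a"
  using qf_D_scale[OF assms(1) _ assms(2), of "-1"] assms(1)
    minus_power_prime_CHAR[of p "1::'a"] prime_p char_p
  by (simp add: is_subfield_def)

lemma qf_D_diff:
  assumes "is_subfield K" and "x \<in> qf_D K p a" and "y \<in> qf_D K p (a::'a list)"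
  shows "x - y \<in> qf_D K p a"
  using qf_D_add[OF assms(1,2) qf_D_uminus[OF assms(1,3)]] by simp

lemma qf_D_sum:
  assumes "is_subfield K" and "\<And>i. i \<in> A \<Longrightarrow> f i \<in> qf_D K p (a::'a list)"
  shows "sum f A \<in> qf_D K p a"
  using assms(2)
  by (induction A rule: infinite_finite_induct)
    (simp_all add: zero_in_qf_D[OF assms(1) prime_gt_0_nat[OF prime_p]] qf_D_add[OF assms(1)])

end

section \<open>Linear algebra over the subfield of \<open>p\<close>-th powers\<close>

definition type_ring :: "'a::field ring" where
  "type_ring = \<lparr>carrier = UNIV, monoid.mult = (*), one = 1, zero = 0, add = (+)\<rparr>"

lemma type_ring_simps [simp]:
  "carrier type_ring = UNIV" "x \<otimes>\<^bsub>type_ring\<^esub> y = x * y" "\<one>\<^bsub>type_ring\<^esub> = 1"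
  "\<zero>\<^bsub>type_ring\<^esub> = 0" "x \<oplus>\<^bsub>type_ring\<^esub> y = x + y"
  by (simp_all add: type_ring_def)

lemma field_type_ring: "field (type_ring :: 'a::field ring)"
proof -
  have "\<exists>y. x + y = 0" for x :: 'a
    using add.right_inverse by blast
  moreover have "x \<noteq> 0 \<Longrightarrow> \<exists>y. x * y = 1" for x :: 'a
    by (rule exI[of _ "inverse x"]) simp
  ultimately show ?thesis
    unfolding type_ring_def by unfold_locales (auto simp: algebra_simps Units_def)
qed

interpretation type_ring: field "type_ring :: 'a::field ring"
  by (rule field_type_ring)

lemma type_ring_uminus [simp]: "\<ominus>\<^bsub>type_ring\<^esub> x = - x"
  by (rule type_ring.minus_equality) auto

lemma type_ring_inv [simp]: "x \<noteq> 0 \<Longrightarrow> inv\<^bsub>type_ring\<^esub> x = inverse x"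
  by (rule type_ring.inv_char) auto

lemma type_ring_combine: "type_ring.combine Ks Us = (\<Sum>i<min (length Ks) (length Us). Ks ! i * Us ! i)"
proof (induction Ks arbitrary: Us)
  case (Cons k Ks)
  then show ?case
    by (cases Us) (simp_all add: sum.lessThan_Suc_shift del: sum.lessThan_Suc)
qed simp

lemma qf_val_eq_combine: "qf_val p a v = type_ring.combine (map (\<lambda>i. v i ^ p) [0..<length a]) a"
  by (simp add: type_ring_combine qf_val_def mult.commute)

definition pth_powers :: "nat \<Rightarrow> 'a::field set" where
  "pth_powers p = range (\<lambda>x. x ^ p)"

lemma list_of_pth_powers:
  assumes "set Ks \<subseteq> pth_powers p"
  obtains v where "\<forall>i<length Ks. Ks ! i = v i ^ p"
proof -
  have "\<forall>i<length Ks. \<exists>y. Ks ! i = y ^ p"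
    using assms nth_mem by (fastforce simp: pth_powers_def)
  then show thesis
    using that by metis
qed

context
  fixes p :: nat
  assumes prime_p: "prime p" and char_p: "CHAR('a::field) = p"
begin

lemma subfield_pth_powers: "subfield (pth_powers p :: 'a set) type_ring"
proof (rule type_ring.subfieldI'[OF type_ring.subringI])
  have fd: "(x + y) ^ p = x ^ p + y ^ p" for x y :: 'a
    by (rule freshmans_dream) (use prime_p char_p in auto)
  show "\<one>\<^bsub>type_ring\<^esub> \<in> (pth_powers p :: 'a set)"
    by (auto simp: pth_powers_def intro: range_eqI[of _ _ 1])
  show "\<ominus>\<^bsub>type_ring\<^esub> h \<in> pth_powers p" if h: "h \<in> pth_powers p" for h :: 'a
  proof -
    obtain x where "h = x ^ p"
      using h by (auto simp: pth_powers_def)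
    then have "\<ominus>\<^bsub>type_ring\<^esub> h = (- x) ^ p"
      using minus_power_prime_CHAR[of p x] prime_p char_p by simp
    then show ?thesis
      by (simp add: pth_powers_def)
  qed
  show "h1 \<otimes>\<^bsub>type_ring\<^esub> h2 \<in> pth_powers p" "h1 \<oplus>\<^bsub>type_ring\<^esub> h2 \<in> pth_powers p"
    if "h1 \<in> pth_powers p" "h2 \<in> pth_powers p" for h1 h2 :: 'a
    using that fd by (auto simp: pth_powers_def power_mult_distrib
        intro: range_eqI[of _ _ "x * y" for x y] range_eqI[of _ _ "x + y" for x y])
  show "inv\<^bsub>type_ring\<^esub> k \<in> pth_powers p" if "k \<in> pth_powers p - {\<zero>\<^bsub>type_ring\<^esub>}" for k :: 'a
    using that by (auto simp: pth_powers_def power_inverse intro: range_eqI[of _ _ "inverse x" for x])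
qed auto

lemma qf_D_UNIV_eq_Span: "qf_D UNIV p a = type_ring.Span (pth_powers p) (a::'a list)"
proof (intro Set.set_eqI iffI)
  fix x
  have Span_iff: "x \<in> type_ring.Span (pth_powers p) a \<longleftrightarrow>
      (\<exists>Ks. set Ks \<subseteq> pth_powers p \<and> length Ks = length a \<and> x = type_ring.combine Ks a)"
    by (rule type_ring.Span_mem_iff_length_version[OF subfield_pth_powers]) simp
  show "x \<in> type_ring.Span (pth_powers p) a" if x: "x \<in> qf_D UNIV p a"
  proof -
    obtain v where "x = qf_val p a v"
      using x by (auto simp: qf_D_def)
    then show ?thesis
      unfolding Span_iff qf_val_eq_combine
      by (intro exI[of _ "map (\<lambda>i. v i ^ p) [0..<length a]"]) (auto simp: pth_powers_def)
  qed
  show "x \<in> qf_D UNIV p a" if x: "x \<in> type_ring.Span (pth_powers p) a"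
  proof -
    obtain Ks where Ks: "set Ks \<subseteq> pth_powers p" "length Ks = length a" "x = type_ring.combine Ks a"
      using x Span_iff by blast
    obtain v where "\<forall>i<length Ks. Ks ! i = v i ^ p"
      using list_of_pth_powers[OF Ks(1)] .
    then have "Ks = map (\<lambda>i. v i ^ p) [0..<length a]"
      using Ks(2) by (auto intro: nth_equalityI)
    then show ?thesis
      using Ks(3) by (auto simp: qf_D_def qf_val_eq_combine)
  qed
qed

lemma qf_anisotropic_UNIV_iff_independent:
  "qf_anisotropic UNIV p a \<longleftrightarrow> type_ring.independent (pth_powers p) (a::'a list)"
proof
  have p_pos: "p > 0"
    using prime_gt_0_nat[OF prime_p] .
  show "type_ring.independent (pth_powers p) a" if aniso: "qf_anisotropic UNIV p a"
  proof (rule type_ring.trivial_combine_imp_independent[OF subfield_pth_powers])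
    fix Ks assume Ks: "set Ks \<subseteq> pth_powers p" "type_ring.combine Ks a = \<zero>\<^bsub>type_ring\<^esub>"
    obtain w where w: "\<forall>i<length Ks. Ks ! i = w i ^ p"
      using list_of_pth_powers[OF Ks(1)] .
    define v where "v i = (if i < length Ks then w i else 0)" for i
    have "qf_val p a v = type_ring.combine Ks a"
      unfolding qf_val_def type_ring_combine
      by (rule sum.mono_neutral_cong_right) (use p_pos in \<open>auto simp: v_def w mult.commute\<close>)
    then have "\<forall>i<length a. v i = 0"
      using aniso Ks(2) by (auto simp: qf_anisotropic_def)
    then show "set (take (length a) Ks) \<subseteq> {\<zero>\<^bsub>type_ring\<^esub>}"
      using w p_pos by (auto simp: set_conv_nth v_def)
  qed simp
  show "qf_anisotropic UNIV p a" if indep: "type_ring.independent (pth_powers p) a"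
    unfolding qf_anisotropic_def
  proof (rule allI, intro impI)
    fix v assume "\<forall>i<length a. v i \<in> UNIV" and "qf_val p a v = 0"
    from this(2) have "set (take (length a) (map (\<lambda>i. v i ^ p) [0..<length a])) \<subseteq> {\<zero>\<^bsub>type_ring\<^esub>}"
      by (intro type_ring.independent_imp_trivial_combine[OF subfield_pth_powers indep])
        (auto simp: pth_powers_def qf_val_eq_combine)
    then show "\<forall>i<length a. v i = 0"
      using p_pos by (auto simp: image_subset_iff)
  qed
qed

lemma qf_anisotropic_length_le:
  assumes "qf_anisotropic UNIV p a" and "qf_anisotropic UNIV p b"
    and "qf_D UNIV p a \<subseteq> qf_D UNIV p (b::'a list)"
  shows "length a \<le> length b"
proof -
  have "set a \<subseteq> qf_D UNIV p a"
    using nth_in_qf_D[OF is_subfield_UNIV prime_gt_0_nat[OF prime_p]] by (auto simp: set_conv_nth)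
  then show ?thesis
    using type_ring.independent_length_le[OF subfield_pth_powers] assms
    unfolding qf_anisotropic_UNIV_iff_independent qf_D_UNIV_eq_Span by blast
qed

lemma exists_anisotropic_part:
  assumes "qf_D UNIV p (a::'a list) \<noteq> {0}"
  obtains b where "is_qform UNIV b" "qf_anisotropic UNIV p b" "qf_D UNIV p b = qf_D UNIV p a"
proof -
  have "set a \<subseteq> carrier type_ring"
    by simp
  then obtain b where indep: "type_ring.independent (pth_powers p) b"
    and "type_ring.Span (pth_powers p) b = type_ring.Span (pth_powers p) a"
    using type_ring.filter_base[OF subfield_pth_powers] by blast
  then have D: "qf_D UNIV p b = qf_D UNIV p a"
    by (simp only: qf_D_UNIV_eq_Span)
  have "b \<noteq> []"
    using D assms by (auto simp: qf_D_def qf_val_def)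
  then show thesis
    using that D indep by (simp add: is_qform_def qf_anisotropic_UNIV_iff_independent)
qed

end

section \<open>Anisotropic forms with equal value sets are isometric\<close>

lemma mat_app_mat_app:
  "mat_app n N (mat_app n M v) i = (\<Sum>k<n. (\<Sum>j<n. N i j * M j k) * (v k :: 'a::field))"
  unfolding mat_app_def
  by (simp add: sum_distrib_left sum_distrib_right algebra_simps) (subst sum.swap, simp)

context
  fixes p :: nat
  assumes prime_p: "prime p" and char_p: "CHAR('a::field) = p"
begin

lemma qf_val_mat_app:
  assumes "length a = n" and "length b = n"
    and columns: "\<forall>k<n. a ! k = qf_val p b (\<lambda>j. M j k)"
  shows "qf_val p b (mat_app n M v) = qf_val p (a::'a list) v"
proof -
  have frob_sum: "(\<Sum>k<n. f k) ^ p = (\<Sum>k<n. f k ^ p)" for f :: "nat \<Rightarrow> 'a"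
    by (rule freshmans_dream_sum) (use prime_p char_p in auto)
  have "qf_val p b (mat_app n M v) = (\<Sum>j<n. b ! j * (\<Sum>k<n. M j k ^ p * v k ^ p))"
    unfolding qf_val_def mat_app_def using assms(2) by (simp add: frob_sum power_mult_distrib)
  also have "\<dots> = (\<Sum>k<n. v k ^ p * (\<Sum>j<n. b ! j * M j k ^ p))"
    unfolding sum_distrib_left by (subst sum.swap) (simp add: mult_ac)
  also have "\<dots> = (\<Sum>k<n. a ! k * v k ^ p)"
    using assms(2) columns by (intro sum.cong) (auto simp: qf_val_def mult.commute)
  finally show ?thesis
    using assms(1) by (simp add: qf_val_def)
qed

lemma qf_anisotropic_mat_mult_eq_id:
  assumes "length a = n" and "length b = n" and aniso: "qf_anisotropic UNIV p a"
    and M: "\<forall>k<n. a ! k = qf_val p b (\<lambda>j. M j k)"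
    and N: "\<forall>j<n. b ! j = qf_val p (a::'a list) (\<lambda>i. N i j)"
    and "i < n" and "k < n"
  shows "(\<Sum>j<n. N i j * M j k) = (if i = k then 1 else 0)"
proof -
  define e where "e i = (if i = k then 1 else 0 :: 'a)" for i
  have "qf_val p a (mat_app n N (\<lambda>j. M j k)) = a ! k"
    using qf_val_mat_app[OF assms(2,1) N] M \<open>k < n\<close> by simp
  moreover have "qf_val p a e = a ! k"
    unfolding e_def by (rule qf_val_unit_vector) (use prime_gt_0_nat[OF prime_p] assms in auto)
  ultimately have "qf_val p a (\<lambda>i. mat_app n N (\<lambda>j. M j k) i - e i) = 0"
    by (simp add: qf_val_diff[OF prime_p char_p])
  then have "mat_app n N (\<lambda>j. M j k) i = e i"
    using aniso assms(1) \<open>i < n\<close> by (auto simp: qf_anisotropic_def)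
  then show ?thesis
    by (simp add: mat_app_def e_def)
qed

lemma mat_app_inverse:
  assumes "length a = n" and "length b = n" and "qf_anisotropic UNIV p a"
    and "\<forall>k<n. a ! k = qf_val p b (\<lambda>j. M j k)"
    and "\<forall>j<n. b ! j = qf_val p (a::'a list) (\<lambda>i. N i j)"
    and "i < n"
  shows "mat_app n N (mat_app n M v) i = v i"
proof -
  have "mat_app n N (mat_app n M v) i = (\<Sum>k<n. (if i = k then v k else 0))"
    unfolding mat_app_mat_app using qf_anisotropic_mat_mult_eq_id[OF assms] by (intro sum.cong) auto
  then show ?thesis
    using \<open>i < n\<close> by simp
qed

lemma qf_iso_of_qf_D_eq:
  assumes aniso: "qf_anisotropic UNIV p a" "qf_anisotropic UNIV p b"
    and D: "qf_D UNIV p a = qf_D UNIV p (b::'a list)"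
  shows "qf_iso p a b"
proof -
  have columns: "\<exists>M. \<forall>k<length c. c ! k = qf_val p d (\<lambda>j. M j k)"
    if "qf_D UNIV p c = qf_D UNIV p d" for c d :: "'a list"
  proof -
    have "\<forall>k<length c. \<exists>v. c ! k = qf_val p d v"
      using nth_in_qf_D[OF is_subfield_UNIV prime_gt_0_nat[OF prime_p], of _ c] that
      by (auto simp: qf_D_def)
    then obtain col where "\<forall>k<length c. c ! k = qf_val p d (col k)"
      by metis
    then show ?thesis
      by (intro exI[of _ "\<lambda>j k. col k j"]) simp
  qed
  define n where "n = length a"
  have "length b = n"
    using qf_anisotropic_length_le[OF prime_p char_p] aniso D unfolding n_def
    by (metis order_refl le_antisym)
  moreover obtain M where M: "\<forall>k<n. a ! k = qf_val p b (\<lambda>j. M j k)"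
    using columns[OF D] unfolding n_def by blast
  moreover obtain N where N: "\<forall>j<n. b ! j = qf_val p a (\<lambda>i. N i j)"
    using columns[OF D[symmetric]] \<open>length b = n\<close> by auto
  ultimately show ?thesis
    unfolding qf_iso_def n_def[symmetric]
    using qf_val_mat_app[OF n_def[symmetric] _ M] mat_app_inverse[OF n_def[symmetric] _ aniso(1) M N]
      mat_app_inverse[OF _ n_def[symmetric] aniso(2) N M]
    by blast
qed

end

section \<open>Finite differences of polynomials\<close>

definition forward_diff :: "'a::comm_ring_1 \<Rightarrow> 'a poly \<Rightarrow> 'a poly" where
  "forward_diff h Q = pcompose Q [:h, 1:] - Q"

lemma poly_forward_diff: "poly (forward_diff h Q) x = poly Q (x + h) - poly Q x"
  by (simp add: forward_diff_def poly_pcompose add.commute)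

lemma forward_diff_pCons: "forward_diff h (pCons a R) = [:h, 1:] * forward_diff h R + smult h R"
proof -
  have "[:h, 1:] * R = smult h R + pCons 0 R"
    by (simp add: mult_pCons_left)
  then show ?thesis
    unfolding forward_diff_def pcompose_pCons by (simp add: algebra_simps)
qed

lemma forward_diff_0 [simp]: "forward_diff h 0 = 0"
  by (simp add: forward_diff_def)

lemma forward_diff_degree_coeff:
  assumes "degree Q \<le> Suc n"
  shows "degree (forward_diff h Q) \<le> n \<and> coeff (forward_diff h Q) n = of_nat (Suc n) * h * coeff Q (Suc n)"
  using assms
proof (induction n arbitrary: Q)
  case 0
  obtain a R where Q: "Q = pCons a R"
    by (cases Q)
  have "degree R = 0"
    using 0 Q by (cases "R = 0") auto
  then obtain r where "R = [:r:]"
    by (rule degree_eq_zeroE)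
  then show ?case
    using Q by (simp add: forward_diff_pCons)
next
  case (Suc n)
  obtain a R where Q: "Q = pCons a R"
    by (cases Q)
  have "degree R \<le> Suc n"
    using Suc.prems Q by (cases "R = 0") auto
  note IH = Suc.IH[OF this]
  have "degree ([:h, 1:] * forward_diff h R) \<le> Suc n"
    using degree_mult_le[of "[:h, 1:]" "forward_diff h R"] IH by simp
  moreover have "degree (smult h R) \<le> Suc n"
    using \<open>degree R \<le> Suc n\<close> degree_smult_le order.trans by blast
  ultimately have "degree (forward_diff h Q) \<le> Suc n"
    unfolding Q forward_diff_pCons using degree_add_le by blast
  moreover have "coeff (forward_diff h R) (Suc n) = 0"
    using IH by (simp add: coeff_eq_0)
  then have "coeff (forward_diff h Q) (Suc n) = of_nat (Suc (Suc n)) * h * coeff Q (Suc (Suc n))"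
    using IH unfolding Q forward_diff_pCons by (simp add: mult_pCons_left algebra_simps)
  ultimately show ?case
    by simp
qed

lemma forward_diff_iterate_coeff:
  fixes P :: "'a::comm_ring_1 poly"
  assumes "k \<le> degree P"
  shows "degree ((forward_diff 1 ^^ k) P) \<le> degree P - k \<and>
    of_nat (fact (degree P - k)) * coeff ((forward_diff 1 ^^ k) P) (degree P - k) = of_nat (fact (degree P)) * lead_coeff P"
  using assms
proof (induction k)
  case (Suc k)
  define m where "m = degree P - Suc k"
  define Q where "Q = (forward_diff 1 ^^ k) P"
  have m: "degree P - k = Suc m"
    using Suc.prems unfolding m_def by simp
  have "degree Q \<le> Suc m"
    using Suc m unfolding Q_def by simp
  note step = forward_diff_degree_coeff[OF this, of 1]
  have "of_nat (fact m) * coeff (forward_diff 1 Q) m = of_nat (fact (Suc m)) * coeff Q (Suc m)"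
    using step by (simp add: algebra_simps)
  then show ?case
    using step Suc m unfolding Q_def m_def[symmetric] by simp
qed simp

lemma poly_forward_diff_top:
  fixes P :: "'a::comm_ring_1 poly"
  assumes "2 \<le> degree P"
  shows "poly (forward_diff y (forward_diff x ((forward_diff 1 ^^ (degree P - 2)) P))) z =
    of_nat (fact (degree P)) * lead_coeff P * x * y"
proof -
  define Q where "Q = (forward_diff 1 ^^ (degree P - 2)) P"
  have Q: "degree Q \<le> Suc (Suc 0)" "2 * coeff Q 2 = of_nat (fact (degree P)) * lead_coeff P"
    using forward_diff_iterate_coeff[of "degree P - 2" P] assms unfolding Q_def
    by (simp_all add: numeral_2_eq_2)
  note step1 = forward_diff_degree_coeff[OF Q(1), of x]
  note step2 = forward_diff_degree_coeff[OF conjunct1[OF step1], of y]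
  have "degree (forward_diff y (forward_diff x Q)) = 0"
    using step2 by simp
  then have "poly (forward_diff y (forward_diff x Q)) z = coeff (forward_diff y (forward_diff x Q)) 0"
    by (auto elim: degree_eq_zeroE)
  also have "\<dots> = 2 * coeff Q 2 * x * y"
    using step1 step2 by (simp add: numeral_2_eq_2 algebra_simps)
  finally show ?thesis
    using Q(2) unfolding Q_def by simp
qed

section \<open>The value set is closed under multiplication\<close>

context
  fixes p :: nat
  assumes prime_p: "prime p" and char_p: "CHAR('a::field) = p"
begin

lemma of_nat_power_char: "(of_nat n :: 'a) ^ p = of_nat n"
proof (induction n)
  case 0
  then show ?case using prime_gt_0_nat[OF prime_p] by simp
next
  case (Suc n)
  have "(of_nat n + 1 :: 'a) ^ p = of_nat n ^ p + 1 ^ p"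
    by (rule freshmans_dream) (use prime_p char_p in auto)
  then show ?case
    using Suc by (simp add: add.commute)
qed

lemma forward_diff_scaled_values:
  assumes F: "is_subfield F" and h: "h \<in> qf_D F p phi"
    and Q: "\<forall>b\<in>qf_D F p phi. \<alpha> * poly Q b \<in> qf_D UNIV p (phi::'a list)"
  shows "\<forall>b\<in>qf_D F p phi. \<alpha> * poly (forward_diff h Q) b \<in> qf_D UNIV p phi"
proof
  fix b assume b: "b \<in> qf_D F p phi"
  have "\<alpha> * poly (forward_diff h Q) b = \<alpha> * poly Q (b + h) - \<alpha> * poly Q b"
    by (simp add: poly_forward_diff right_diff_distrib)
  then show "\<alpha> * poly (forward_diff h Q) b \<in> qf_D UNIV p phi"
    using qf_D_diff[OF prime_p char_p is_subfield_UNIV] Q qf_D_add[OF prime_p char_p F b h] b by simp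
qed

lemma scaled_product_in_qf_D:
  assumes F: "is_subfield F" and one: "1 \<in> qf_D F p phi"
    and lead: "lead_coeff P \<in> pth_powers p" and deg: "2 \<le> degree P" "degree P < p"
    and hyp: "\<forall>b\<in>qf_D F p phi. \<alpha> * poly P b \<in> qf_D UNIV p (phi::'a list)"
    and x: "x \<in> qf_D F p phi" and y: "y \<in> qf_D F p phi"
  shows "\<alpha> * x * y \<in> qf_D UNIV p phi"
proof -
  define d where "d = degree P"
  have "\<forall>b\<in>qf_D F p phi. \<alpha> * poly ((forward_diff 1 ^^ k) P) b \<in> qf_D UNIV p phi" for k
    by (induction k) (simp_all add: hyp forward_diff_scaled_values[OF F one])
  then have "\<forall>b\<in>qf_D F p phi.
      \<alpha> * poly (forward_diff y (forward_diff x ((forward_diff 1 ^^ (d - 2)) P))) b \<in> qf_D UNIV p phi"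
    by (intro forward_diff_scaled_values[OF F y] forward_diff_scaled_values[OF F x])
  then have "\<alpha> * poly (forward_diff y (forward_diff x ((forward_diff 1 ^^ (d - 2)) P))) 0 \<in> qf_D UNIV p phi"
    using zero_in_qf_D[OF F prime_gt_0_nat[OF prime_p]] by blast
  then have in_D: "\<alpha> * (of_nat (fact d) * lead_coeff P * x * y) \<in> qf_D UNIV p phi"
    using poly_forward_diff_top[OF deg(1)] unfolding d_def by simp
  text \<open>The constant \<open>d! \<cdot> lead_coeff P\<close> is a nonzero \<open>p\<close>-th power: \<open>d < p\<close>, and
    integers are fixed by Frobenius.\<close>
  obtain s where s: "lead_coeff P = s ^ p"
    using lead by (auto simp: pth_powers_def)
  define t where "t = of_nat (fact d) * s"
  have t_pow: "t ^ p = of_nat (fact d) * lead_coeff P"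
    unfolding t_def s power_mult_distrib of_nat_power_char ..
  have "\<not> p dvd fact d"
    using deg(2) prime_dvd_fact_iff[OF prime_p] unfolding d_def by simp
  then have "(of_nat (fact d) :: 'a) \<noteq> 0"
    by (simp add: of_nat_eq_0_iff_char_dvd char_p)
  moreover have "lead_coeff P \<noteq> 0"
    using deg(1) by auto
  ultimately have "t \<noteq> 0"
    using t_pow prime_gt_0_nat[OF prime_p] by (auto simp: power_0_left)
  have "\<alpha> * (t ^ p * x * y) \<in> qf_D UNIV p phi"
    using in_D by (simp add: t_pow)
  then have "inverse t ^ p * (\<alpha> * (t ^ p * x * y)) \<in> qf_D UNIV p phi"
    by (rule qf_D_scale[OF is_subfield_UNIV UNIV_I])
  then show ?thesis
    using \<open>t \<noteq> 0\<close> by (simp add: power_inverse field_simps)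
qed

lemma scaled_product_in_qf_D_UNIV:
  assumes F: "is_subfield F"
    and scaled: "\<And>x y. x \<in> qf_D F p phi \<Longrightarrow> y \<in> qf_D F p phi \<Longrightarrow> \<alpha> * x * y \<in> qf_D UNIV p phi"
    and X: "X \<in> qf_D UNIV p phi" and Y: "Y \<in> qf_D UNIV p (phi::'a list)"
  shows "\<alpha> * X * Y \<in> qf_D UNIV p phi"
proof -
  obtain v u where XY: "X = qf_val p phi v" "Y = qf_val p phi u"
    using X Y by (auto simp: qf_D_def)
  have "\<alpha> * X * Y = (\<Sum>i<length phi. \<alpha> * (phi ! i * v i ^ p)) * (\<Sum>j<length phi. phi ! j * u j ^ p)"
    unfolding XY qf_val_def by (simp add: sum_distrib_left)
  also have "\<dots> = (\<Sum>i<length phi. \<Sum>j<length phi. (v i * u j) ^ p * (\<alpha> * phi ! i * phi ! j))"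
    unfolding sum_product by (intro sum.cong refl) (simp add: power_mult_distrib mult_ac)
  also have "\<dots> \<in> qf_D UNIV p phi"
    using nth_in_qf_D[OF F prime_gt_0_nat[OF prime_p]]
    by (intro qf_D_sum[OF prime_p char_p is_subfield_UNIV] qf_D_scale[OF is_subfield_UNIV] scaled) auto
  finally show ?thesis .
qed

lemma qf_D_mult_closed_of_scaled:
  assumes "p > 2" and \<alpha>: "\<alpha> \<in> qf_D UNIV p phi" "\<alpha> \<noteq> 0"
    and scaled: "\<And>X Y. X \<in> qf_D UNIV p phi \<Longrightarrow> Y \<in> qf_D UNIV p phi \<Longrightarrow> \<alpha> * X * Y \<in> qf_D UNIV p phi"
    and X: "X \<in> qf_D UNIV p phi" and Y: "Y \<in> qf_D UNIV p (phi::'a list)"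
  shows "X * Y \<in> qf_D UNIV p phi"
proof -
  have odd_power: "\<alpha> ^ (2 * k + 1) \<in> qf_D UNIV p phi" for k
  proof (induction k)
    case (Suc k)
    then have "\<alpha> * \<alpha> ^ (2 * k + 1) * \<alpha> \<in> qf_D UNIV p phi"
      using scaled \<alpha>(1) by blast
    then show ?case
      by (simp add: algebra_simps)
  qed (use \<alpha>(1) in simp)
  obtain j where "p = 2 * j + 1"
    using prime_odd_nat[OF prime_p assms(1)] by (rule oddE)
  then obtain k where k: "p = 2 * k + 1 + 2"
    using assms(1) by (cases j) auto
  have "\<alpha> * \<alpha> ^ (2 * k + 1) * (\<alpha> * X * Y) \<in> qf_D UNIV p phi"
    using scaled[OF odd_power scaled[OF X Y]] .
  moreover have "\<alpha> * \<alpha> ^ (2 * k + 1) * (\<alpha> * X * Y) = \<alpha> ^ p * (X * Y)"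
    unfolding k by (simp add: power_add power2_eq_square mult_ac)
  ultimately have "inverse \<alpha> ^ p * (\<alpha> ^ p * (X * Y)) \<in> qf_D UNIV p phi"
    using qf_D_scale[OF is_subfield_UNIV UNIV_I] by metis
  moreover have "inverse \<alpha> ^ p * \<alpha> ^ p = 1"
    using \<alpha>(2) by (simp flip: power_mult_distrib)
  ultimately show ?thesis
    by (simp add: mult.assoc[symmetric])
qed

end

definition poly_over :: "'a::field set \<Rightarrow> 'a poly \<Rightarrow> bool" where
  "poly_over W g \<longleftrightarrow> (\<forall>i. coeff g i \<in> W)"

lemma poly_over_divmod_monic:
  assumes W: "is_subfield W" and g: "poly_over W g" "lead_coeff g = 1" "degree g \<ge> 1"
    and f: "poly_over W f"
  obtains q r where "f = q * g + r" "poly_over W r" "degree r < degree g"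
  using f
proof (induction "degree f" arbitrary: f thesis rule: less_induct)
  case less
  show ?case
  proof (cases "degree f < degree g")
    case True
    then show ?thesis using less.prems by (intro less.prems(1)[of 0 f]) auto
  next
    case False
    define f' where "f' = f - monom (lead_coeff f) (degree f - degree g) * g"
    have "poly_over W f'"
      using less.prems(2) g(1) W unfolding f'_def poly_over_def
      by (auto simp: coeff_monom_mult is_subfield_def intro!: is_subfield_diff[OF W])
    moreover have "degree f' < degree f"
    proof -
      have "coeff f' i = 0" if "i \<ge> degree f" for i
        using that False g(2) coeff_eq_0[of f] coeff_eq_0[of g]
        by (cases "i = degree f") (auto simp: f'_def coeff_monom_mult)
      then show ?thesis
        using False g(3) by (metis leading_coeff_0_iff linorder_not_le degree_0 le_zero_eq not_one_le_zero
            order.strict_trans1)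
    qed
    ultimately obtain q r where "f' = q * g + r" "poly_over W r" "degree r < degree g"
      using less.hyps by blast
    then show ?thesis
      by (intro less.prems(1)[of "q + monom (lead_coeff f) (degree f - degree g)" r])
        (auto simp: f'_def algebra_simps)
  qed
qed

lemma minimal_poly_over_dvd:
  assumes W: "is_subfield W" and g: "poly_over W g" "lead_coeff g = 1" "poly g c = 0"
    and minimal: "\<And>h. h \<noteq> 0 \<Longrightarrow> poly_over W h \<Longrightarrow> poly h c = 0 \<Longrightarrow> degree g \<le> degree h"
    and f: "poly_over W f" "poly f c = 0"
  shows "g dvd f"
proof -
  have "degree g \<ge> 1"
  proof (rule ccontr)
    assume "\<not> degree g \<ge> 1"
    then obtain a where "g = [:a:]"
      by (metis degree_eq_zeroE less_one not_le)
    then show False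
      using g(2,3) by simp
  qed
  then obtain q r where qr: "f = q * g + r" "poly_over W r" "degree r < degree g"
    using poly_over_divmod_monic[OF W g(1,2) _ f(1)] by blast
  have "poly r c = 0"
    using f(2) g(3) qr(1) by simp
  then have "r = 0"
    using minimal[OF _ qr(2)] qr(3) by fastforce
  then show ?thesis
    using qr(1) by simp
qed

lemma monic_dvd_linear_power:
  fixes g :: "'a::field poly"
  assumes monic: "lead_coeff g = 1" and dvd: "g dvd [:-c, 1:] ^ k"
  shows "g = [:-c, 1:] ^ degree g"
proof -
  obtain q where q: "[:-c, 1:] ^ k = g * q"
    using dvd by (elim dvdE)
  then have nonzero: "g \<noteq> 0" "q \<noteq> 0"
    by (metis mult_zero_left mult_zero_right pCons_eq_0_iff power_not_zero zero_neq_one)+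
  have "Polynomial.order c (g * q) = k" "degree (g * q) = k"
    by (metis q order_power_n_n, metis q degree_linear_power)
  then have "Polynomial.order c g + Polynomial.order c q = degree g + degree q"
    using order_mult[of g q c] degree_mult_eq[OF nonzero] nonzero by simp
  then have "Polynomial.order c g = degree g"
    using order_degree[OF nonzero(1), of c] order_degree[OF nonzero(2), of c] by linarith
  then obtain s where s: "g = [:-c, 1:] ^ degree g * s"
    using order_1[of c g] by (elim dvdE) auto
  have "s \<noteq> 0"
    using s nonzero(1) by (metis mult_zero_right)
  then have "degree ([:-c, 1:] ^ degree g * s) = degree g + degree s"
    by (simp add: degree_mult_eq degree_linear_power)
  then have "degree s = 0"
    by (simp only: s[symmetric])
  then obtain a where a: "s = [:a:]"
    by (rule degree_eq_zeroE)
  have "lead_coeff ([:-c, 1:] ^ degree g * [:a:]) = a"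
    by (simp add: lead_coeff_mult lead_coeff_power)
  then have "a = 1"
    using monic s a by metis
  then have "s = 1"
    using a by (simp add: one_pCons)
  then show ?thesis
    using s by (metis mult_1_right)
qed

context
  fixes p :: nat
  assumes prime_p: "prime p" and char_p: "CHAR('a::field) = p"
begin

text \<open>The minimal polynomial of \<open>c\<close> over \<open>W\<close> divides \<open>X\<^sup>p - c\<^sup>p = (X - c)\<^sup>p\<close>, so it is
  \<open>(X - c)\<^sup>m\<close>; its coefficient \<open>-m c\<close> at \<open>X\<^sup>m\<^sup>-\<^sup>1\<close> lies in \<open>W\<close>, which forces \<open>m \<ge> p\<close>.\<close>
lemma powers_independent_over_subfield:
  assumes W: "is_subfield W" and c: "c \<notin> W" "c ^ p \<in> W"
    and w: "\<forall>j<p. w j \<in> W" "(\<Sum>j<p. w j * c ^ j) = (0::'a)"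
  shows "\<forall>j<p. w j = 0"
proof (rule ccontr)
  assume "\<not> (\<forall>j<p. w j = 0)"
  then obtain j0 where j0: "j0 < p" "w j0 \<noteq> 0"
    by blast
  define g0 where "g0 = (\<Sum>j<p. monom (w j) j)"
  have coeff_g0: "coeff g0 i = (if i < p then w i else 0)" for i
    unfolding g0_def by (simp add: coeff_sum)
  have "coeff g0 j0 \<noteq> 0"
    using j0 by (simp add: coeff_g0)
  moreover have "poly_over W g0"
    using w(1) W by (auto simp: poly_over_def coeff_g0 is_subfield_def)
  moreover have "poly g0 c = 0"
    using w(2) by (simp add: g0_def poly_sum poly_monom)
  ultimately have g0: "g0 \<noteq> 0 \<and> poly_over W g0 \<and> poly g0 c = 0"
    by auto
  have "degree g0 < p"
    using prime_gt_0_nat[OF prime_p] by (intro degree_lessI) (auto simp: coeff_g0)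
  obtain g where g: "g \<noteq> 0" "poly_over W g" "poly g c = 0"
    and least: "\<forall>h. h \<noteq> 0 \<and> poly_over W h \<and> poly h c = 0 \<longrightarrow> degree g \<le> degree h"
    using ex_has_least_nat[of "\<lambda>h. h \<noteq> 0 \<and> poly_over W h \<and> poly h c = 0" g0 degree] g0 by blast
  have minimal: "degree g \<le> degree h" if "h \<noteq> 0" "poly_over W h" "poly h c = 0" for h
    using least that by blast
  have "degree g < p"
    using minimal g0 \<open>degree g0 < p\<close> by (meson order.strict_trans1)
  define g1 where "g1 = smult (inverse (lead_coeff g)) g"
  have g1: "poly_over W g1" "lead_coeff g1 = 1" "poly g1 c = 0" "degree g1 = degree g"
    using g W by (auto simp: g1_def poly_over_def is_subfield_def)
  have "[:-c, 1:] ^ p = monom 1 p - [:c ^ p:]"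
  proof -
    have "[:-c, 1:] ^ p = ([:0, 1:] + [:-c:]) ^ p"
      by simp
    also have "\<dots> = [:0, 1:] ^ p + [:-c:] ^ p"
      by (rule freshmans_dream) (use prime_p char_p in simp_all)
    finally show ?thesis
      using minus_power_prime_CHAR[of p c] prime_p char_p by (simp add: monom_altdef poly_const_pow)
  qed
  moreover have "poly_over W (monom 1 p - [:c ^ p:])"
    using W c(2) unfolding poly_over_def
    by (auto simp: coeff_monom coeff_pCons' is_subfield_def intro!: is_subfield_diff[OF W])
  moreover have "poly (monom 1 p - [:c ^ p:]) c = 0"
    by (simp add: poly_monom)
  ultimately have "g1 dvd [:-c, 1:] ^ p"
    using minimal_poly_over_dvd[OF W g1(1-3)] minimal unfolding g1(4) by metis
  then have g1_eq: "g1 = [:-c, 1:] ^ degree g"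
    using monic_dvd_linear_power[OF g1(2)] g1(4) by metis
  obtain m where m: "degree g = Suc m"
    using g1(3) g1_eq by (cases "degree g") auto
  have "coeff g1 m = of_nat (Suc m) * (- c)"
    unfolding g1_eq m by (subst coeff_linear_poly_power) simp_all
  then have "of_nat (Suc m) * (- c) \<in> W"
    using g1(1) unfolding poly_over_def by metis
  then have "- (inverse (of_nat (Suc m)) * (of_nat (Suc m) * (- c))) \<in> W"
    using is_subfieldD(4-6)[OF W] of_nat_in_subfield[OF W] by blast
  moreover have "\<not> CHAR('a) dvd Suc m"
    using \<open>degree g < p\<close> m char_p by (auto dest: dvd_imp_le)
  then have "of_nat (Suc m) \<noteq> (0::'a)"
    by (metis of_nat_eq_0_iff_char_dvd)
  ultimately show False
    using c(1) by (simp add: mult.assoc[symmetric])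
qed

end

section \<open>Tensoring with \<open>\<langle>1, c, \<dots>, c\<^sup>p\<^sup>-\<^sup>1\<rangle>\<close>\<close>

lemma qf_val_Cons: "qf_val p (x # a) v = x * v 0 ^ p + qf_val p a (\<lambda>i. v (Suc i))"
  unfolding qf_val_def by (simp add: sum.lessThan_Suc_shift del: sum.lessThan_Suc)

lemma qf_val_append: "qf_val p (a @ b) v = qf_val p a v + qf_val p b (\<lambda>i. v (length a + i))"
  by (induction a arbitrary: v) (simp_all add: qf_val_Cons, simp add: qf_val_def)

lemma qf_val_map_mult: "qf_val p (map (\<lambda>y. x * y) a) v = x * qf_val p a v"
  by (induction a arbitrary: v) (simp_all add: qf_val_Cons algebra_simps, simp add: qf_val_def)

lemma length_qf_tensor: "length (qf_tensor xs b) = length xs * length b"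
  by (induction xs) (auto simp: qf_tensor_def)

lemma qf_val_qf_tensor:
  "qf_val p (qf_tensor xs b) v = (\<Sum>j<length xs. xs ! j * qf_val p b (\<lambda>i. v (j * length b + i)))"
proof (induction xs arbitrary: v)
  case Nil
  then show ?case by (simp add: qf_tensor_def qf_val_def)
next
  case (Cons x xs)
  have tensor_Cons: "qf_tensor (x # xs) b = map (\<lambda>y. x * y) b @ qf_tensor xs b"
    by (simp add: qf_tensor_def)
  show ?case
    unfolding tensor_Cons qf_val_append qf_val_map_mult Cons.IH
    by (simp add: sum.lessThan_Suc_shift algebra_simps del: sum.lessThan_Suc)
qed

lemma length_qpfister: "length (qpfister p cs) = p ^ length cs"
  by (induction cs) (auto simp: length_qf_tensor)

lemma qf_D_qf_tensor:
  "qf_D UNIV p (qf_tensor xs b) = {\<Sum>j<length xs. xs ! j * w j | w. \<forall>j<length xs. w j \<in> qf_D UNIV p b}"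
proof (intro Set.set_eqI iffI)
  fix x
  assume "x \<in> qf_D UNIV p (qf_tensor xs b)"
  then obtain v where "x = qf_val p (qf_tensor xs b) v"
    by (auto simp: qf_D_def)
  then show "x \<in> {\<Sum>j<length xs. xs ! j * w j | w. \<forall>j<length xs. w j \<in> qf_D UNIV p b}"
    unfolding qf_val_qf_tensor qf_D_def
    by (intro CollectI exI[of _ "\<lambda>j. qf_val p b (\<lambda>i. v (j * length b + i))"]) auto
next
  fix x
  assume "x \<in> {\<Sum>j<length xs. xs ! j * w j | w. \<forall>j<length xs. w j \<in> qf_D UNIV p b}"
  then obtain w where x: "x = (\<Sum>j<length xs. xs ! j * w j)"
    and w: "\<forall>j<length xs. w j \<in> qf_D UNIV p b"
    by blast
  have "\<forall>j<length xs. \<exists>v. w j = qf_val p b v"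
    using w by (auto simp: qf_D_def)
  then obtain u where u: "\<forall>j<length xs. w j = qf_val p b (u j)"
    by metis
  define v where "v k = u (k div length b) (k mod length b)" for k
  have "qf_val p b (\<lambda>i. v (j * length b + i)) = qf_val p b (u j)" for j
  proof (rule qf_val_cong)
    fix i assume "i < length b"
    moreover from this have "length b \<noteq> 0"
      by linarith
    ultimately have "(j * length b + i) div length b = j" "(j * length b + i) mod length b = i"
      by simp_all
    then show "v (j * length b + i) = u j i"
      by (simp add: v_def)
  qed
  then have "qf_val p (qf_tensor xs b) v = x"
    unfolding qf_val_qf_tensor x using u by (intro sum.cong) auto
  then show "x \<in> qf_D UNIV p (qf_tensor xs b)"
    unfolding qf_D_def by blast
qed

definition power_span :: "nat \<Rightarrow> 'a::field set \<Rightarrow> 'a \<Rightarrow> 'a set" where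
  "power_span p W c = {\<Sum>j<p. c ^ j * w j | w. \<forall>j<p. w j \<in> W}"

lemma qf_D_pfister_step:
  "qf_D UNIV p (qf_tensor (map (\<lambda>j. c ^ j) [0..<p]) b) = power_span p (qf_D UNIV p b) c"
  unfolding qf_D_qf_tensor power_span_def by simp

lemma power_span_subset:
  assumes "is_subfield V" and "W \<subseteq> V" and "c \<in> V"
  shows "power_span p W c \<subseteq> V"
  unfolding power_span_def
  using assms by (auto intro!: is_subfield_sum is_subfieldD(4) is_subfield_power)

lemma zero_in_power_span: "is_subfield W \<Longrightarrow> 0 \<in> power_span p W c"
  unfolding power_span_def by (intro CollectI exI[of _ "\<lambda>_. 0"]) (simp add: is_subfieldD)

lemma power_span_add:
  assumes W: "is_subfield W" and "x \<in> power_span p W c" and "y \<in> power_span p W c"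
  shows "x + y \<in> power_span p W c"
proof -
  obtain w u where "x = (\<Sum>j<p. c ^ j * w j)" "\<forall>j<p. w j \<in> W"
    and "y = (\<Sum>j<p. c ^ j * u j)" "\<forall>j<p. u j \<in> W"
    using assms(2,3) by (auto simp: power_span_def)
  then show ?thesis
    unfolding power_span_def using is_subfieldD(3)[OF W]
    by (intro CollectI exI[of _ "\<lambda>j. w j + u j"]) (auto simp: distrib_left sum.distrib)
qed

lemma power_span_sum:
  assumes "is_subfield W" and "\<And>i. i \<in> A \<Longrightarrow> f i \<in> power_span p W c"
  shows "sum f A \<in> power_span p W c"
  using assms(2)
  by (induction A rule: infinite_finite_induct)
    (simp_all add: zero_in_power_span[OF assms(1)] power_span_add[OF assms(1)])

text \<open>Exponents of \<open>c\<close> can be reduced modulo \<open>p\<close> because \<open>c\<^sup>p \<in> W\<close>.\<close>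
lemma power_mult_in_power_span:
  assumes W: "is_subfield W" and "c ^ p \<in> W" and "p > 0" and "w \<in> W"
  shows "c ^ k * w \<in> power_span p W c"
proof -
  define j where "j = k mod p"
  define w' where "w' = (c ^ p) ^ (k div p) * w"
  have "c ^ k * w = c ^ j * w'"
    unfolding j_def w'_def
    by (metis (no_types) div_mult_mod_eq mult.assoc mult.commute power_add power_mult)
  moreover have "w' \<in> W"
    unfolding w'_def using assms by (simp add: is_subfieldD(4) is_subfield_power)
  moreover have "j < p"
    unfolding j_def using \<open>p > 0\<close> by simp
  moreover have "(\<Sum>i<p. c ^ i * (if i = j then w' else 0)) = c ^ j * w'"
    using \<open>j < p\<close> by (simp add: if_distrib[of "times _"] cong: if_cong)
  ultimately show ?thesis
    unfolding power_span_def using is_subfieldD(1)[OF W]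
    by (intro CollectI exI[of _ "\<lambda>i. if i = j then w' else 0"]) auto
qed

lemma power_span_mult:
  assumes W: "is_subfield W" and "c ^ p \<in> W" and "p > 0"
    and "x \<in> power_span p W c" and "y \<in> power_span p W c"
  shows "x * y \<in> power_span p W c"
proof -
  obtain w u where x: "x = (\<Sum>i<p. c ^ i * w i)" "\<forall>i<p. w i \<in> W"
    and y: "y = (\<Sum>j<p. c ^ j * u j)" "\<forall>j<p. u j \<in> W"
    using assms(4,5) by (auto simp: power_span_def)
  have "x * y = (\<Sum>i<p. \<Sum>j<p. c ^ (i + j) * (w i * u j))"
    unfolding x y sum_product by (simp add: power_add mult_ac)
  also have "\<dots> \<in> power_span p W c"
    using x(2) y(2) is_subfieldD(4)[OF W]
    by (intro power_span_sum[OF W] power_mult_in_power_span[OF assms(1-3)]) auto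
  finally show ?thesis .
qed

section \<open>Subfields between \<open>p\<close>-th powers and the whole field are quasi-Pfister value sets\<close>

context
  fixes p :: nat
  assumes prime_p: "prime p" and char_p: "CHAR('a::field) = p"
begin

lemma is_subfield_qf_D:
  assumes one: "1 \<in> qf_D UNIV p b"
    and mult: "\<And>x y. x \<in> qf_D UNIV p b \<Longrightarrow> y \<in> qf_D UNIV p b \<Longrightarrow> x * y \<in> qf_D UNIV p (b::'a list)"
  shows "is_subfield (qf_D UNIV p b)"
proof -
  have p_pos: "p > 0"
    using prime_gt_0_nat[OF prime_p] .
  have power: "x ^ n \<in> qf_D UNIV p b" if "x \<in> qf_D UNIV p b" for x n
    using that one mult by (induction n) simp_all
  have "inverse x \<in> qf_D UNIV p b" if "x \<in> qf_D UNIV p b" for x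
  proof (cases "x = 0")
    case False
    then have "inverse x ^ p * x ^ (p - 1) = inverse x"
      using p_pos by (simp add: power_inverse field_simps flip: power_Suc)
    then show ?thesis
      using qf_D_scale[OF is_subfield_UNIV UNIV_I power[OF that, of "p - 1"], of "inverse x"] by (simp only:)
  qed (use zero_in_qf_D[OF is_subfield_UNIV p_pos] in simp)
  then show ?thesis
    using zero_in_qf_D[OF is_subfield_UNIV p_pos] one mult qf_D_add[OF prime_p char_p is_subfield_UNIV]
      qf_D_uminus[OF prime_p char_p is_subfield_UNIV]
    unfolding is_subfield_def by simp
qed

lemma qf_anisotropic_qf_tensor:
  assumes aniso: "qf_anisotropic UNIV p b"
    and indep: "\<And>w. \<forall>j<length xs. w j \<in> qf_D UNIV p b \<Longrightarrow> (\<Sum>j<length xs. xs ! j * w j) = 0 \<Longrightarrow>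
      \<forall>j<length xs. w j = 0"
  shows "qf_anisotropic UNIV p (qf_tensor xs (b::'a list))"
  unfolding qf_anisotropic_def
proof (rule allI, intro impI allI)
  fix v k
  assume "qf_val p (qf_tensor xs b) v = 0" and "k < length (qf_tensor xs b)"
  have block_zero: "\<forall>j<length xs. qf_val p b (\<lambda>i. v (j * length b + i)) = 0"
    by (rule indep) (use \<open>qf_val p (qf_tensor xs b) v = 0\<close> in \<open>auto simp: qf_D_def qf_val_qf_tensor\<close>)
  have "k < length xs * length b"
    using \<open>k < length (qf_tensor xs b)\<close> by (simp add: length_qf_tensor)
  moreover from this have "length b > 0"
    by (cases "length b") auto
  ultimately have "k div length b < length xs" "k mod length b < length b"
    by (auto simp: less_mult_imp_div_less)
  then have "qf_val p b (\<lambda>i. v (k div length b * length b + i)) = 0"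
    using block_zero by blast
  then have "\<forall>i<length b. v (k div length b * length b + i) = 0"
    using aniso unfolding qf_anisotropic_def by blast
  then show "v k = 0"
    using \<open>k mod length b < length b\<close> by (metis div_mult_mod_eq)
qed

lemma pfister_step:
  assumes aniso: "qf_anisotropic UNIV p b" and W: "is_subfield (qf_D UNIV p b)"
    and c: "c \<notin> qf_D UNIV p (b::'a list)"
  shows "qf_anisotropic UNIV p (qf_tensor (map (\<lambda>j. c ^ j) [0..<p]) b)"
    and "is_subfield (qf_D UNIV p (qf_tensor (map (\<lambda>j. c ^ j) [0..<p]) b))"
proof -
  have p_pos: "p > 0"
    using prime_gt_0_nat[OF prime_p] .
  have cp: "c ^ p \<in> qf_D UNIV p b"
    using qf_D_scale[OF is_subfield_UNIV UNIV_I is_subfieldD(2)[OF W], of c] by simp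
  show "qf_anisotropic UNIV p (qf_tensor (map (\<lambda>j. c ^ j) [0..<p]) b)"
    using powers_independent_over_subfield[OF prime_p char_p W c cp]
    by (intro qf_anisotropic_qf_tensor[OF aniso]) (simp add: mult.commute)
  have "is_subfield (power_span p (qf_D UNIV p b) c)"
  proof (rule is_subfield_qf_D[of "qf_tensor (map (\<lambda>j. c ^ j) [0..<p]) b", unfolded qf_D_pfister_step])
    show "1 \<in> power_span p (qf_D UNIV p b) c"
      using power_mult_in_power_span[OF W cp p_pos is_subfieldD(2)[OF W], of 0] by simp
  qed (use power_span_mult[OF W cp p_pos] in blast)
  then show "is_subfield (qf_D UNIV p (qf_tensor (map (\<lambda>j. c ^ j) [0..<p]) b))"
    by (simp add: qf_D_pfister_step)
qed

lemma qf_D_one: "qf_D UNIV p [1::'a] = pth_powers p"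
  by (auto simp: qf_D_def qf_val_def pth_powers_def)

lemma qf_anisotropic_one: "qf_anisotropic UNIV p [1::'a]"
  using prime_gt_0_nat[OF prime_p] by (simp add: qf_anisotropic_def qf_val_def)

lemma is_subfield_pth_powers: "is_subfield (pth_powers p :: 'a set)"
  unfolding qf_D_one[symmetric]
proof (rule is_subfield_qf_D)
  show "1 \<in> qf_D UNIV p [1::'a]"
    unfolding qf_D_one pth_powers_def by (metis power_one rangeI)
  show "x * y \<in> qf_D UNIV p [1::'a]" if "x \<in> qf_D UNIV p [1]" "y \<in> qf_D UNIV p [1]" for x y
    using that unfolding qf_D_one pth_powers_def by (auto simp flip: power_mult_distrib)
qed

lemma exists_qpfister_of_subfield:
  assumes V: "is_subfield (qf_D UNIV p (phi::'a list))"
  obtains cs where "qf_anisotropic UNIV p (qpfister p cs)" "qf_D UNIV p (qpfister p cs) = qf_D UNIV p phi"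
proof -
  have "qf_D UNIV p phi \<noteq> {0}"
    using is_subfieldD(2)[OF V] by auto
  then obtain b where b: "qf_anisotropic UNIV p b" "qf_D UNIV p b = qf_D UNIV p phi"
    using exists_anisotropic_part[OF prime_p char_p] by metis
  have "\<exists>cs'. qf_anisotropic UNIV p (qpfister p cs') \<and> qf_D UNIV p (qpfister p cs') = qf_D UNIV p phi"
    if "qf_anisotropic UNIV p (qpfister p cs)" "is_subfield (qf_D UNIV p (qpfister p cs))"
      "qf_D UNIV p (qpfister p cs) \<subseteq> qf_D UNIV p phi" for cs
    using that
  proof (induction "length b - length (qpfister p cs)" arbitrary: cs rule: less_induct)
    case less
    show ?case
    proof (cases "qf_D UNIV p (qpfister p cs) = qf_D UNIV p phi")
      case True
      then show ?thesis
        using less.prems(1) by blast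
    next
      case False
      then obtain c where c: "c \<in> qf_D UNIV p phi" "c \<notin> qf_D UNIV p (qpfister p cs)"
        using less.prems(3) by blast
      note step = pfister_step[OF less.prems(1,2) c(2)]
      have sub: "qf_D UNIV p (qpfister p (c # cs)) \<subseteq> qf_D UNIV p phi"
        using power_span_subset[OF V less.prems(3) c(1)] by (simp add: qf_D_pfister_step)
      have "length (qpfister p (c # cs)) \<le> length b"
        using qf_anisotropic_length_le[OF prime_p char_p _ b(1)] step(1) sub b(2) by simp
      moreover have "length (qpfister p cs) < length (qpfister p (c # cs))"
        unfolding length_qpfister using prime_gt_1_nat[OF prime_p] by simp
      ultimately show ?thesis
        using less.hyps[of "c # cs"] step sub by simp
    qed
  qed
  moreover have "qf_D UNIV p (qpfister p []) \<subseteq> qf_D UNIV p phi"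
    using qf_D_scale[OF is_subfield_UNIV UNIV_I is_subfieldD(2)[OF V]]
    by (auto simp: qf_D_one pth_powers_def)
  moreover have "qf_anisotropic UNIV p (qpfister p ([] :: 'a list))"
    and "is_subfield (qf_D UNIV p (qpfister p ([] :: 'a list)))"
    using qf_anisotropic_one is_subfield_pth_powers by (simp_all add: qf_D_one)
  ultimately show thesis
    using that by blast
qed

end

theorem mainTheorem11:
  fixes F :: "'a::field set" and p :: nat and phi :: "'a list"
    and P :: "'a poly" and \<alpha> :: 'a
  assumes "prime p" and "p > 2" and "CHAR('a) = p"
    and "is_subfield F"
    and "is_qform F phi"
    and "1 \<in> qf_D F p phi"
    and "\<forall>i. coeff P i \<in> {x ^ p | x. x \<in> F}"
    and "2 \<le> degree P" and "degree P < p"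
    and "\<alpha> \<in> qf_D UNIV p phi" and "\<alpha> \<noteq> 0"
    and "\<forall>b \<in> qf_D F p phi. \<alpha> * poly P b \<in> qf_D UNIV p phi"
  shows "(\<exists>psi. is_qform UNIV psi \<and> qf_anisotropic UNIV p psi
                \<and> qf_D UNIV p psi = qf_D UNIV p phi)
       \<and> (\<forall>psi. is_qform UNIV psi \<and> qf_anisotropic UNIV p psi
                \<and> qf_D UNIV p psi = qf_D UNIV p phi \<longrightarrow> is_quasi_pfister p psi)"
proof -
  note prime_p = assms(1) and char_p = assms(3)
  have one: "1 \<in> qf_D UNIV p phi"
    using assms(6) qf_D_mono[of F UNIV] by blast
  have "lead_coeff P \<in> pth_powers p"
    using assms(7) by (auto simp: pth_powers_def)
  note scaled = scaled_product_in_qf_D_UNIV[OF prime_p char_p assms(4)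
      scaled_product_in_qf_D[OF prime_p char_p assms(4,6) this assms(8,9,12)]]
  have "is_subfield (qf_D UNIV p phi)"
    using qf_D_mult_closed_of_scaled[OF prime_p char_p assms(2,10,11) scaled]
    by (intro is_subfield_qf_D[OF prime_p char_p one])
  then obtain cs where cs: "qf_anisotropic UNIV p (qpfister p cs)"
    "qf_D UNIV p (qpfister p cs) = qf_D UNIV p phi"
    by (rule exists_qpfister_of_subfield[OF prime_p char_p])
  show ?thesis
  proof (intro conjI allI impI)
    have "qf_D UNIV p phi \<noteq> {0}"
      using one by auto
    then show "\<exists>psi. is_qform UNIV psi \<and> qf_anisotropic UNIV p psi \<and> qf_D UNIV p psi = qf_D UNIV p phi"
      by (metis exists_anisotropic_part[OF prime_p char_p])
    fix psi
    assume "is_qform UNIV psi \<and> qf_anisotropic UNIV p psi \<and> qf_D UNIV p psi = qf_D UNIV p phi"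
    then have "qf_iso p psi (qpfister p cs)"
      using qf_iso_of_qf_D_eq[OF prime_p char_p _ cs(1)] cs(2) by simp
    then show "is_quasi_pfister p psi"
      unfolding is_quasi_pfister_def by blast
  qed
qed

end
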